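(* Let $A\in M_n(\mathbb{F}_2)$ for some $n\geq 1$. Then there exist $N,D\in M_n(\mathbb{F}_2)$ with $A=N+D$, $N^2=0$ and $D^4=D$.
   Context: $\mathbb{F}_2$ denotes the field with two elements. *)

theory Defs
  imports "HOL-Analysis.Analysis" "HOL-Library.Z2"
begin

end

theory Submission
  imports Defs "HOL-Computational_Algebra.Computational_Algebra"
begin

text \<open>The linear map of \<open>A\<close> is a direct sum of cyclic maps: the kernels of coprime factors of an
  annihilating polynomial split the space, and on a primary part the cyclic subspace of a vector
  of maximal order has an invariant complement, cut out by a linear functional. Splittings
  \<open>N + D\<close> with \<open>N\<^sup>2 = 0\<close> and \<open>D\<^sup>4 = D\<close> glue along direct sums, so it suffices to treat a cyclic
  map with minimal polynomial \<open>p\<close> of degree \<open>2K + l\<close>. Expanding in powers of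
  \<open>\<Phi> = x\<^sup>2 + x + 1\<close> gives the basis \<open>X\<^sup>e \<Phi>\<^sup>j\<close> (\<open>e < 2\<close>, \<open>j < K\<close>), followed by \<open>X\<^sup>i \<Phi>\<^sup>K\<close>
  (\<open>i < l\<close>). On each pair \<open>\<Phi>\<^sup>j, X \<Phi>\<^sup>j\<close> let \<open>D\<close> act as multiplication by \<open>X\<close> modulo \<open>\<Phi>\<close>, whose
  roots lie in \<open>F\<^sub>4\<close>, so that \<open>D\<^sup>3 = 1\<close> there; \<open>N\<close> carries the overflow \<open>\<Phi>\<^sup>j\<^sup>+\<^sup>1\<close> into the next
  pair and squares to zero. The top \<open>l \<in> {1, 2, 4}\<close> vectors carry an explicitly checked splitting
  of the companion matrix of \<open>p div \<Phi>\<^sup>K\<close>, which also absorbs the remainder \<open>p mod \<Phi>\<^sup>K\<close>.\<close>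

instance bit :: finite
proof
  have "(UNIV :: bit set) = {0, 1}"
    by (auto intro: bit.exhaust)
  then show "finite (UNIV :: bit set)"
    by (metis finite.emptyI finite.insertI)
qed

text \<open>As for any field (compare theory \<open>Field_as_Ring\<close>), this makes \<open>bit poly\<close> a Euclidean ring
  with gcd, with prime factorisations and Bezout identities.\<close>

instantiation bit ::
  "{unique_euclidean_ring, normalization_euclidean_semiring, normalization_semidom_multiplicative}"
begin
definition [simp]: "normalize_bit = (\<lambda>x :: bit. x)"
definition [simp]: "unit_factor_bit = (\<lambda>x :: bit. x)"
definition [simp]: "euclidean_size_bit = (\<lambda>x :: bit. if x = 0 then 0 else 1 :: nat)"
definition [simp]: "division_segment (x :: bit) = 1"
instance
  by standard (simp_all add: dvd_field_iff field_split_simps split: if_splits)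
end

instantiation bit :: euclidean_ring_gcd
begin
definition gcd_bit :: "bit \<Rightarrow> bit \<Rightarrow> bit" where
  "gcd_bit = Euclidean_Algorithm.gcd"
definition lcm_bit :: "bit \<Rightarrow> bit \<Rightarrow> bit" where
  "lcm_bit = Euclidean_Algorithm.lcm"
definition Gcd_bit :: "bit set \<Rightarrow> bit" where
  "Gcd_bit = Euclidean_Algorithm.Gcd"
definition Lcm_bit :: "bit set \<Rightarrow> bit" where
  "Lcm_bit = Euclidean_Algorithm.Lcm"
instance
  by standard (simp_all add: gcd_bit_def lcm_bit_def Gcd_bit_def Lcm_bit_def)
end

instance bit :: field_gcd ..

lemma bit_add_self [simp]: "(a :: bit) + a = 0"
  by (cases a) simp_all

lemma vec_bit_add_self [simp]: "(x :: bit ^ 'n) + x = 0"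
  by (simp add: vec_eq_iff)

lemma vec_bit_add_self_left [simp]: "(x :: bit ^ 'n) + (x + y) = y"
  by (simp add: vec_eq_iff)

text \<open>Needed because the simplifier combines \<open>x + x\<close> into \<open>2 * x\<close> before it can cancel.\<close>

lemma vec_bit_double [simp]: "2 * (x :: bit ^ 'n) = 0"
  by (simp add: vec_eq_iff)

lemma poly_bit_add_self [simp]: "(p :: bit poly) + p = 0"
  by (rule poly_eqI) (simp only: coeff_add bit_add_self coeff_0)

lemma lead_coeff_bit: "(p :: bit poly) \<noteq> 0 \<Longrightarrow> lead_coeff p = 1"
  by (metis bit_not_zero_iff leading_coeff_neq_0)

lemma is_unit_bit_poly: "is_unit (u :: bit poly) \<longleftrightarrow> u = 1"
proof
  assume u: "is_unit u"
  then have "u \<noteq> 0"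
    by auto
  with u have "degree u = 0"
    by (simp add: is_unit_iff_degree)
  with \<open>u \<noteq> 0\<close> show "u = 1"
    using lead_coeff_bit[of u] by (metis degree_0_id one_pCons)
qed simp

section \<open>Polynomials of a linear map\<close>

abbreviation linear_op :: "('a::field ^ 'n \<Rightarrow> 'a ^ 'n) \<Rightarrow> bool" where
  "linear_op f \<equiv> Vector_Spaces.linear (*s) (*s) f"

lemma linear_op_bitI:
  fixes f :: "bit ^ 'n \<Rightarrow> bit ^ 'n"
  assumes "\<And>x y. f (x + y) = f x + f y"
  shows "linear_op f"
proof -
  have "f 0 = 0"
    by (metis add_cancel_right_right assms)
  then have "f (c *s x) = c *s f x" for c x
    by (cases c) simp_all
  then show ?thesis
    using assms by (simp add: Vector_Spaces.linear_iff vec.vector_space_axioms)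
qed

lemma linear_op_funpow: "linear_op f \<Longrightarrow> linear_op (f ^^ n)"
  by (induction n) (simp_all add: vec.linear_id Vector_Spaces.linear_compose)

lemma linear_op_on_family:
  fixes b :: "'i \<Rightarrow> 'a::field ^ 'n"
  assumes inj: "inj_on b S" and indep: "vec.independent (b ` S)"
  obtains g where "linear_op g" and "\<And>s. s \<in> S \<Longrightarrow> g (b s) = F s"
proof -
  obtain g where "linear_op g" and "\<forall>x\<in>b ` S. g x = F (inv_into S b x)"
    using vec.linear_independent_extend[OF indep, of "\<lambda>x. F (inv_into S b x)"] by blast
  then show ?thesis
    using that inj by auto
qed

definition poly_op :: "'a::field poly \<Rightarrow> ('a ^ 'n \<Rightarrow> 'a ^ 'n) \<Rightarrow> 'a ^ 'n \<Rightarrow> 'a ^ 'n" where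
  "poly_op p f x = fold_coeffs (\<lambda>a r. a *s x + f r) p 0"

lemma poly_op_0 [simp]: "poly_op 0 f x = 0"
  by (simp add: poly_op_def)

lemma poly_op_pCons: "linear_op f \<Longrightarrow> poly_op (pCons a p) f x = a *s x + f (poly_op p f x)"
  by (cases "p = 0 \<and> a = 0") (auto simp: poly_op_def vec.linear_0)

context
  fixes f :: "'a::field ^ 'n \<Rightarrow> 'a ^ 'n"
  assumes f: "linear_op f"
begin

lemma poly_op_add: "poly_op (p + q) f x = poly_op p f x + poly_op q f x"
  by (induction p q rule: poly_induct2)
    (simp_all add: poly_op_pCons[OF f] vec.linear_add[OF f] vector_sadd_rdistrib algebra_simps)

lemma poly_op_smult: "poly_op (smult c p) f x = c *s poly_op p f x"
  by (induction p rule: pCons_induct)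
    (simp_all add: poly_op_pCons[OF f] vec.linear_scale[OF f] vector_add_ldistrib)

lemma linear_poly_op: "linear_op (poly_op p f)"
proof -
  have "poly_op p f (x + y) = poly_op p f x + poly_op p f y" for x y
    by (induction p rule: pCons_induct)
      (simp_all add: poly_op_pCons[OF f] vec.linear_add[OF f] vector_add_ldistrib algebra_simps)
  moreover have "poly_op p f (c *s x) = c *s poly_op p f x" for c x
    by (induction p rule: pCons_induct)
      (simp_all add: poly_op_pCons[OF f] vec.linear_scale[OF f] vec.linear_add[OF f]
        vector_add_ldistrib vector_smult_assoc mult.commute)
  ultimately show ?thesis
    by (simp add: Vector_Spaces.linear_iff vec.vector_space_axioms)
qed

lemma poly_op_mult: "poly_op (p * q) f x = poly_op p f (poly_op q f x)"
  by (induction p rule: pCons_induct)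
    (simp_all add: poly_op_add poly_op_smult poly_op_pCons[OF f])

lemma poly_op_commute: "f (poly_op p f x) = poly_op p f (f x)"
  by (induction p rule: pCons_induct)
    (simp_all add: poly_op_pCons[OF f] vec.linear_0[OF f] vec.linear_add[OF f] vec.linear_scale[OF f])

lemma poly_op_1 [simp]: "poly_op 1 f x = x"
  by (simp add: one_pCons poly_op_pCons[OF f] vec.linear_0[OF f])

lemma poly_op_X_mult: "poly_op ([:0, 1:] * p) f x = f (poly_op p f x)"
  by (simp add: poly_op_pCons[OF f])

lemma poly_op_monom: "poly_op (monom c k) f x = c *s (f ^^ k) x"
proof (induction k)
  case 0
  have "f 0 = 0" by (rule vec.linear_0[OF f])
  then show ?case by (simp add: monom_0 poly_op_pCons[OF f])
next
  case (Suc k)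
  then show ?case by (simp add: monom_Suc poly_op_pCons[OF f] vec.linear_scale[OF f])
qed

lemma poly_op_sum: "poly_op (\<Sum>i\<in>S. p i) f x = (\<Sum>i\<in>S. poly_op (p i) f x)"
  by (induction S rule: infinite_finite_induct) (simp_all add: poly_op_add)

lemma poly_op_diff: "poly_op (p - q) f x = poly_op p f x - poly_op q f x"
  using poly_op_add[of "p - q" q x] by (simp add: eq_diff_eq)

lemma poly_op_as_sum:
  assumes "degree p < n"
  shows "poly_op p f x = (\<Sum>i<n. coeff p i *s (f ^^ i) x)"
proof -
  obtain n' where "n = Suc n'"
    using assms by (cases n) auto
  then have "(\<Sum>i<n. monom (coeff p i) i) = p"
    using poly_as_sum_of_monoms'[of p n'] assms by (simp add: lessThan_Suc_atMost)
  then have "poly_op p f x = poly_op (\<Sum>i<n. monom (coeff p i) i) f x"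
    by (simp only:)
  then show ?thesis
    by (simp add: poly_op_sum poly_op_monom)
qed

end

lemma degree_div_eq:
  fixes p q :: "'a::field poly"
  assumes q: "q \<noteq> 0" and le: "degree q \<le> degree p"
  shows "degree (p div q) = degree p - degree q"
proof (cases "p = 0")
  case True
  then show ?thesis
    using le by simp
next
  case False
  have r: "p mod q = 0 \<or> degree (p mod q) < degree q"
    using degree_mod_less[OF q] by blast
  have "p div q \<noteq> 0"
  proof
    assume "p div q = 0"
    then have "p = p mod q"
      using div_mult_mod_eq[of p q] by simp
    then show False
      using r le False by auto
  qed
  then have dm: "degree (p div q * q) = degree (p div q) + degree q"
    using q by (simp add: degree_mult_eq)
  have "p mod q = 0 \<or> degree (p mod q) < degree (p div q * q)"
    using r dm by auto
  then have "degree (p div q * q + p mod q) = degree (p div q * q)"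
    by (metis add.right_neutral degree_add_eq_left)
  then show ?thesis
    using dm by simp
qed

lemma degree_monic_remainder:
  fixes p :: "'a::field poly"
  assumes "0 < degree p"
  shows "degree (monom 1 (degree p) - smult (inverse (lead_coeff p)) p) < degree p"
    (is "degree ?r < _")
proof -
  have "degree ?r \<le> degree p"
    by (intro degree_diff_le) (auto simp: degree_monom_le)
  moreover have "coeff ?r (degree p) = 0"
    using assms by (auto simp: field_simps)
  ultimately show ?thesis
    using assms leading_coeff_0_iff[of ?r] by (cases "degree ?r = degree p") auto
qed

lemma triangular_family_spans:
  fixes e :: "nat \<Rightarrow> 'a::field poly"
  assumes e: "\<And>s. s < n \<Longrightarrow> degree (e s) = s \<and> e s \<noteq> 0" and h: "degree h < n"
  shows "\<exists>c. h = (\<Sum>s<n. smult (c s) (e s))"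
  using assms
proof (induction n arbitrary: h)
  case 0
  then show ?case by simp
next
  case (Suc n)
  define a where "a = coeff h n / lead_coeff (e n)"
  define h' where "h' = h - smult a (e n)"
  have en: "degree (e n) = n" "e n \<noteq> 0"
    using Suc.prems(1) by auto
  have "coeff (e n) n = lead_coeff (e n)"
    using en(1) by simp
  moreover have "lead_coeff (e n) \<noteq> 0"
    using en(2) by simp
  ultimately have "coeff h' n = 0"
    by (simp add: h'_def a_def)
  moreover have "degree h' \<le> n"
    unfolding h'_def using Suc.prems(2) en
    by (intro degree_diff_le) (auto intro: order.trans[OF degree_smult_le])
  ultimately have "h' = 0 \<or> degree h' < n"
    using leading_coeff_0_iff[of h'] by (cases "degree h' = n") simp_all
  then obtain c where c: "h' = (\<Sum>s<n. smult (c s) (e s))"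
  proof
    assume "h' = 0"
    then show ?thesis
      using that[of "\<lambda>_. 0"] by simp
  next
    assume "degree h' < n"
    then have "\<exists>c. h' = (\<Sum>s<n. smult (c s) (e s))"
      by (intro Suc.IH) (use Suc.prems(1) in simp_all)
    then show ?thesis
      using that by blast
  qed
  have "(\<Sum>s<n. smult ((c(n := a)) s) (e s)) = h'"
    unfolding c by (rule sum.cong) simp_all
  then have "h = (\<Sum>s<Suc n. smult ((c(n := a)) s) (e s))"
    by (simp add: h'_def)
  then show ?case
    by blast
qed

lemma triangular_family_independent:
  fixes e :: "nat \<Rightarrow> 'a::field poly"
  assumes e: "\<And>s. s < n \<Longrightarrow> degree (e s) = s \<and> e s \<noteq> 0"
    and zero: "(\<Sum>s<n. smult (c s) (e s)) = 0" and "s < n"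
  shows "c s = 0"
  using assms
proof (induction n arbitrary: s)
  case 0
  then show ?case by simp
next
  case (Suc n)
  have en: "degree (e n) = n" "e n \<noteq> 0"
    using Suc.prems(1) by auto
  have "coeff (\<Sum>s<n. smult (c s) (e s)) n = 0"
    using Suc.prems(1) by (simp add: coeff_sum coeff_eq_0)
  moreover have "coeff (\<Sum>s<Suc n. smult (c s) (e s)) n =
      coeff (\<Sum>s<n. smult (c s) (e s)) n + c n * coeff (e n) n"
    by (simp only: sum.lessThan_Suc coeff_add coeff_smult)
  moreover have "coeff (\<Sum>s<Suc n. smult (c s) (e s)) n = 0"
    by (simp only: Suc.prems(2) coeff_0)
  ultimately have "c n * lead_coeff (e n) = 0"
    using en(1) by simp
  then have cn: "c n = 0"
    using en(2) by simp
  then have "(\<Sum>s<n. smult (c s) (e s)) = 0"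
    using Suc.prems(2) by simp
  then show ?case
    using Suc cn by (cases "s = n") auto
qed

lemma poly_op_in_span_triangular:
  fixes e :: "nat \<Rightarrow> 'a::field poly"
  assumes f: "linear_op f" and e: "\<And>s. s < n \<Longrightarrow> degree (e s) = s \<and> e s \<noteq> 0"
    and "degree h < n"
  shows "poly_op h f v \<in> vec.span ((\<lambda>s. poly_op (e s) f v) ` {..<n})"
proof -
  obtain c where "h = (\<Sum>s<n. smult (c s) (e s))"
    using triangular_family_spans[OF e \<open>degree h < n\<close>] by blast
  then have "poly_op h f v = (\<Sum>s<n. c s *s poly_op (e s) f v)"
    by (simp add: poly_op_sum[OF f] poly_op_smult[OF f])
  also have "\<dots> \<in> vec.span ((\<lambda>s. poly_op (e s) f v) ` {..<n})"
    by (intro vec.span_sum vec.span_scale vec.span_base) simp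
  finally show ?thesis .
qed

section \<open>Cyclic subspaces\<close>

definition invariant_subspace :: "('a::field ^ 'n \<Rightarrow> 'a ^ 'n) \<Rightarrow> ('a ^ 'n) set \<Rightarrow> bool" where
  "invariant_subspace f W \<longleftrightarrow> vec.subspace W \<and> f ` W \<subseteq> W"

lemma poly_op_in_invariant_subspace:
  assumes f: "linear_op f" and W: "invariant_subspace f W" and x: "x \<in> W"
  shows "poly_op p f x \<in> W"
proof (induction p rule: pCons_induct)
  case 0
  then show ?case
    using W by (simp add: invariant_subspace_def vec.subspace_0)
next
  case (pCons a p)
  then show ?case
    using W x by (auto simp: invariant_subspace_def poly_op_pCons[OF f]
        intro!: vec.subspace_add vec.subspace_scale)
qed

lemma independent_family_if_scalars_zero:
  fixes b :: "nat \<Rightarrow> 'a::field ^ 'n"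
  assumes zero: "\<And>c s. (\<Sum>s<n. c s *s b s) = 0 \<Longrightarrow> s < n \<Longrightarrow> c s = 0"
  shows "inj_on b {..<n}" and "vec.independent (b ` {..<n})"
proof -
  show inj: "inj_on b {..<n}"
  proof (rule inj_onI, rule ccontr)
    fix s t assume st: "s \<in> {..<n}" "t \<in> {..<n}" "b s = b t" "s \<noteq> t"
    define c where "c i = (if i = s then 1 else 0) - (if i = t then 1 else 0 :: 'a)" for i
    have "c i *s b i = (if i = s then b i else 0) - (if i = t then b i else 0)" for i
      by (simp add: c_def vector_sub_rdistrib)
    then have "(\<Sum>i<n. c i *s b i) = b s - b t"
      using st by (simp add: sum_subtractf)
    then have "c s = 0"
      using zero st by simp
    then show False
      using st by (simp add: c_def)
  qed
  show "vec.independent (b ` {..<n})"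
  proof (rule vec.independent_if_scalars_zero)
    fix c x assume "(\<Sum>x\<in>b ` {..<n}. c x *s x) = 0" "x \<in> b ` {..<n}"
    then show "c x = 0"
      using zero[of "c \<circ> b"] by (auto simp: sum.reindex[OF inj])
  qed simp
qed

definition cyclic_subspace :: "('a::field ^ 'n \<Rightarrow> 'a ^ 'n) \<Rightarrow> 'a ^ 'n \<Rightarrow> ('a ^ 'n) set" where
  "cyclic_subspace f v = range (\<lambda>h. poly_op h f v)"

definition minimal_annihilator :: "('a::field ^ 'n \<Rightarrow> 'a ^ 'n) \<Rightarrow> 'a ^ 'n \<Rightarrow> 'a poly \<Rightarrow> bool" where
  "minimal_annihilator f v p \<longleftrightarrow>
     p \<noteq> 0 \<and> poly_op p f v = 0 \<and> (\<forall>h. h \<noteq> 0 \<longrightarrow> degree h < degree p \<longrightarrow> poly_op h f v \<noteq> 0)"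

lemma cyclic_subspace_generator: "linear_op f \<Longrightarrow> v \<in> cyclic_subspace f v"
  using range_eqI[of v "\<lambda>h. poly_op h f v" 1] by (simp add: cyclic_subspace_def)

lemma invariant_cyclic_subspace:
  assumes f: "linear_op f"
  shows "invariant_subspace f (cyclic_subspace f v)"
  unfolding invariant_subspace_def vec.subspace_def cyclic_subspace_def
proof (intro conjI ballI allI subsetI)
  show "0 \<in> range (\<lambda>h. poly_op h f v)"
    by (rule range_eqI[of _ _ 0]) simp
  fix x y assume "x \<in> range (\<lambda>h. poly_op h f v)" "y \<in> range (\<lambda>h. poly_op h f v)"
  then obtain g h where x: "x = poly_op g f v" and y: "y = poly_op h f v"
    by blast
  show "x + y \<in> range (\<lambda>h. poly_op h f v)"
    using poly_op_add[OF f, of g h v] x y by (intro range_eqI[of _ _ "g + h"]) simp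
  show "c *s x \<in> range (\<lambda>h. poly_op h f v)" for c
    using poly_op_smult[OF f, of c g v] x by (intro range_eqI[of _ _ "smult c g"]) simp
next
  fix y assume "y \<in> f ` range (\<lambda>h. poly_op h f v)"
  then obtain h where "y = f (poly_op h f v)"
    by blast
  then show "y \<in> range (\<lambda>h. poly_op h f v)"
    using poly_op_X_mult[OF f, of h v] by (intro range_eqI[of _ _ "[:0, 1:] * h"]) simp
qed

lemma cyclic_subspace_trivial:
  assumes f: "linear_op f" and p: "minimal_annihilator f v p" and "degree p = 0"
  shows "cyclic_subspace f v = {0}"
proof -
  have "p = [:coeff p 0:]" "coeff p 0 \<noteq> 0"
    using p \<open>degree p = 0\<close> by (auto simp: minimal_annihilator_def elim: degree_eq_zeroE)
  then have "v = 0"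
    using p by (metis minimal_annihilator_def poly_op_0 poly_op_pCons[OF f] vector_mul_eq_0
        vec.linear_0[OF f] add.right_neutral)
  then show ?thesis
    using vec.linear_0[OF linear_poly_op[OF f]] by (auto simp: cyclic_subspace_def)
qed

lemma cyclic_subspace_low_degree:
  assumes f: "linear_op f" and p: "minimal_annihilator f v p" and "0 < degree p"
    and z: "z \<in> cyclic_subspace f v"
  obtains h where "degree h < degree p" and "z = poly_op h f v"
proof -
  obtain h where z: "z = poly_op h f v"
    using z by (auto simp: cyclic_subspace_def)
  have "poly_op h f v = poly_op (h div p * p + h mod p) f v"
    by simp
  also have "\<dots> = poly_op (h mod p) f v"
    using p vec.linear_0[OF linear_poly_op[OF f]]
    by (simp only: poly_op_add[OF f] poly_op_mult[OF f] minimal_annihilator_def) simp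
  finally have "z = poly_op (h mod p) f v"
    using z by simp
  moreover have "degree (h mod p) < degree p"
    using degree_mod_less[of p h] p \<open>0 < degree p\<close>
    by (cases "h mod p = 0") (auto simp: minimal_annihilator_def)
  ultimately show ?thesis
    using that by blast
qed

lemma cyclic_subspace_basis:
  fixes e :: "nat \<Rightarrow> 'a::field poly"
  assumes f: "linear_op f" and p: "minimal_annihilator f v p" and "0 < degree p"
    and e: "\<And>s. s < degree p \<Longrightarrow> degree (e s) = s \<and> e s \<noteq> 0"
  defines "b \<equiv> \<lambda>s. poly_op (e s) f v"
  shows "inj_on b {..<degree p}" and "vec.independent (b ` {..<degree p})"
    and "vec.span (b ` {..<degree p}) = cyclic_subspace f v"
proof -
  have comb: "(\<Sum>s<n. c s *s b s) = poly_op (\<Sum>s<n. smult (c s) (e s)) f v" for c n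
    by (simp add: b_def poly_op_sum[OF f] poly_op_smult[OF f])
  have "c s = 0" if "(\<Sum>s<degree p. c s *s b s) = 0" "s < degree p" for c s
  proof -
    have "degree (\<Sum>s<degree p. smult (c s) (e s)) < degree p"
      using e that(2)
      by (intro degree_sum_less) (auto intro: le_less_trans[OF degree_smult_le])
    then have "(\<Sum>s<degree p. smult (c s) (e s)) = 0"
      using p that(1) comb unfolding minimal_annihilator_def by metis
    then show ?thesis
      using triangular_family_independent[OF e] that(2) by blast
  qed
  then show "inj_on b {..<degree p}" and "vec.independent (b ` {..<degree p})"
    using independent_family_if_scalars_zero by blast+
  show "vec.span (b ` {..<degree p}) = cyclic_subspace f v"
  proof
    have "b ` {..<degree p} \<subseteq> cyclic_subspace f v"
      by (auto simp: b_def cyclic_subspace_def)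
    then show "vec.span (b ` {..<degree p}) \<subseteq> cyclic_subspace f v"
      using invariant_cyclic_subspace[OF f]
      by (intro vec.span_minimal) (auto simp: invariant_subspace_def)
  next
    show "cyclic_subspace f v \<subseteq> vec.span (b ` {..<degree p})"
    proof
      fix x assume "x \<in> cyclic_subspace f v"
      then obtain h where "degree h < degree p" and "x = poly_op h f v"
        using cyclic_subspace_low_degree[OF f p \<open>0 < degree p\<close>] by blast
      then show "x \<in> vec.span (b ` {..<degree p})"
        unfolding b_def using poly_op_in_span_triangular[OF f e] by blast
    qed
  qed
qed

lemma cyclic_functional:
  fixes f :: "'a::field ^ 'n \<Rightarrow> 'a ^ 'n"
  assumes f: "linear_op f" and p: "minimal_annihilator f v p" and "0 < degree p"
  obtains \<phi> where "Vector_Spaces.linear (*s) (*) \<phi>"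
    and "\<And>h. degree h < degree p \<Longrightarrow> \<phi> (poly_op h f v) = coeff h (degree p - 1)"
proof -
  interpret vsp: vector_space_pair "(*s) :: 'a \<Rightarrow> 'a ^ 'n \<Rightarrow> 'a ^ 'n" "(*) :: 'a \<Rightarrow> 'a \<Rightarrow> 'a" ..
  define d where "d = degree p"
  define b where "b i = poly_op (monom 1 i) f v" for i
  have family: "degree (monom (1::'a) s) = s \<and> monom (1::'a) s \<noteq> 0" for s
    by (simp add: degree_monom_eq)
  note basis = cyclic_subspace_basis[OF f p \<open>0 < degree p\<close> family, folded b_def d_def]
  obtain \<phi> where \<phi>: "Vector_Spaces.linear (*s) (*) \<phi>"
    and \<phi>_b: "\<forall>x\<in>b ` {..<d}. \<phi> x = (if x = b (d - 1) then 1 else 0)"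
    using vsp.linear_independent_extend[OF basis(2), of "\<lambda>x. if x = b (d - 1) then 1 else 0"]
    by blast
  interpret \<phi>: Vector_Spaces.linear "(*s)" "(*)" \<phi>
    by (fact \<phi>)
  have \<phi>_b': "\<phi> (b i) = (if i = d - 1 then 1 else 0)" if "i < d" for i
    using \<phi>_b that inj_onD[OF basis(1), of i "d - 1"] \<open>0 < degree p\<close> by (auto simp: d_def)
  have "\<phi> (poly_op h f v) = coeff h (d - 1)" if "degree h < d" for h
  proof -
    have "poly_op h f v = (\<Sum>i<d. coeff h i *s b i)"
      using that by (simp add: b_def poly_op_as_sum[OF f] poly_op_monom[OF f])
    then have "\<phi> (poly_op h f v) = (\<Sum>i<d. coeff h i * (if i = d - 1 then 1 else 0))"
      by (simp add: \<phi>.sum \<phi>.scale \<phi>_b')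
    also have "\<dots> = (\<Sum>i<d. if i = d - 1 then coeff h i else 0)"
      by (intro sum.cong) simp_all
    also have "\<dots> = coeff h (d - 1)"
      using \<open>0 < degree p\<close> by (simp add: d_def)
    finally show ?thesis .
  qed
  then show ?thesis
    using that \<phi> by (simp add: d_def)
qed

locale cyclic_dual =
  \<phi>: Vector_Spaces.linear "(*s) :: 'a \<Rightarrow> 'a ^ 'n \<Rightarrow> 'a ^ 'n" "(*) :: 'a \<Rightarrow> 'a \<Rightarrow> 'a" \<phi>
  for \<phi> :: "'a::field ^ 'n \<Rightarrow> 'a" +
  fixes f :: "'a ^ 'n \<Rightarrow> 'a ^ 'n" and v :: "'a ^ 'n" and p :: "'a poly" and W :: "('a ^ 'n) set"
  assumes f: "linear_op f" and W: "invariant_subspace f W" and v: "v \<in> W"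
    and p: "minimal_annihilator f v p" and positive: "0 < degree p"
    and annihilates: "\<And>x. x \<in> W \<Longrightarrow> poly_op p f x = 0"
    and \<phi>_poly_op: "\<And>h. degree h < degree p \<Longrightarrow> \<phi> (poly_op h f v) = coeff h (degree p - 1)"
begin

definition complement :: "('a ^ 'n) set" where
  "complement = {w \<in> W. \<forall>i<degree p. \<phi> ((f ^^ i) w) = 0}"

lemma \<phi>_shift:
  assumes "degree h + i < degree p"
  shows "\<phi> ((f ^^ i) (poly_op h f v)) = coeff h (degree p - 1 - i)"
proof -
  have "(f ^^ i) (poly_op h f v) = poly_op (monom 1 i * h) f v"
    by (simp add: poly_op_mult[OF f] poly_op_monom[OF f])
  moreover have "degree (monom 1 i * h) < degree p"
    using assms by (cases "h = 0") (simp_all add: degree_mult_eq degree_monom_eq)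
  moreover have "coeff (monom 1 i * h) (degree p - 1) = coeff h (degree p - 1 - i)"
    using assms coeff_monom_mult[of 1 i h "degree p - 1"] by simp
  ultimately show ?thesis
    using \<phi>_poly_op by simp
qed

lemma invariant_complement: "invariant_subspace f complement"
proof -
  have W_sub: "vec.subspace W" and W_inv: "f ` W \<subseteq> W"
    using W by (simp_all add: invariant_subspace_def)
  note power_linear = linear_op_funpow[OF f]
  have "vec.subspace complement"
    using W_sub unfolding complement_def vec.subspace_def
    by (auto simp: vec.linear_add[OF power_linear] vec.linear_scale[OF power_linear]
        vec.linear_0[OF power_linear] \<phi>.add \<phi>.scale \<phi>.zero)
  moreover have "f w \<in> complement" if w: "w \<in> complement" for w
  proof -
    have "\<phi> ((f ^^ Suc i) w) = 0" if "i < degree p" for i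
    proof (cases "Suc i < degree p")
      case True
      then show ?thesis
        using w unfolding complement_def by blast
    next
      case False
      then have "Suc i = degree p"
        using that by simp
      define r where "r = monom 1 (degree p) - smult (inverse (lead_coeff p)) p"
      have "(f ^^ Suc i) w = poly_op r f w"
        using \<open>Suc i = degree p\<close> w annihilates
        by (simp add: r_def complement_def poly_op_diff[OF f] poly_op_smult[OF f] poly_op_monom[OF f])
      also have "\<dots> = (\<Sum>j<degree p. coeff r j *s (f ^^ j) w)"
        using degree_monic_remainder[OF positive] by (intro poly_op_as_sum[OF f]) (simp add: r_def)
      finally show ?thesis
        using w by (simp add: \<phi>.sum \<phi>.scale complement_def)
    qed
    then show ?thesis
      using w W_inv by (auto simp: complement_def funpow_swap1)
  qed
  ultimately show ?thesis
    by (auto simp: invariant_subspace_def)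
qed

lemma cyclic_subspace_inter_complement: "cyclic_subspace f v \<inter> complement = {0}"
proof -
  have "z = 0" if z: "z \<in> cyclic_subspace f v" "z \<in> complement" for z
  proof -
    obtain h where h: "degree h < degree p" "z = poly_op h f v"
      using cyclic_subspace_low_degree[OF f p positive z(1)] by blast
    show "z = 0"
    proof (cases "h = 0")
      case False
      define i where "i = degree p - 1 - degree h"
      have "\<phi> ((f ^^ i) z) = lead_coeff h"
        using h \<phi>_shift[of h i] by (simp add: i_def)
      moreover have "\<phi> ((f ^^ i) z) = 0"
        using z(2) h(1) by (simp add: complement_def i_def)
      ultimately show ?thesis
        using False by simp
    qed (simp add: h)
  qed
  moreover have "0 \<in> cyclic_subspace f v" "0 \<in> complement"
    using invariant_cyclic_subspace[OF f] invariant_complement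
    by (simp_all add: invariant_subspace_def vec.subspace_0)
  ultimately show ?thesis
    by blast
qed

lemma complement_correction:
  assumes "r \<le> degree p"
  shows "\<exists>h. degree h < degree p \<and> (\<forall>i<r. \<phi> ((f ^^ i) (w - poly_op h f v)) = 0)"
  using assms
proof (induction r)
  case 0
  then show ?case
    using positive by (auto intro: exI[of _ 0])
next
  case (Suc r)
  then obtain h where h: "degree h < degree p" "\<forall>i<r. \<phi> ((f ^^ i) (w - poly_op h f v)) = 0"
    by auto
  define a where "a = \<phi> ((f ^^ r) (w - poly_op h f v))"
  \<comment> \<open>by \<open>\<phi>_shift\<close>, this repairs the \<open>r\<close>-th condition and leaves the earlier ones intact\<close>
  define h' where "h' = h + monom a (degree p - 1 - r)"
  have "degree h' < degree p"
    unfolding h'_def using h(1) Suc.prems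
    by (intro degree_add_less) (auto intro: le_less_trans[OF degree_monom_le])
  moreover have "\<phi> ((f ^^ i) (w - poly_op h' f v)) = 0" if "i < Suc r" for i
  proof -
    define e where "e = poly_op (monom 1 (degree p - 1 - r)) f v"
    have "w - poly_op h' f v = (w - poly_op h f v) - a *s e"
      by (simp add: e_def h'_def poly_op_add[OF f] poly_op_monom[OF f] algebra_simps)
    then have "\<phi> ((f ^^ i) (w - poly_op h' f v)) = \<phi> ((f ^^ i) (w - poly_op h f v)) - a * \<phi> ((f ^^ i) e)"
      by (simp only: vec.linear_diff[OF linear_op_funpow[OF f]] vec.linear_scale[OF linear_op_funpow[OF f]]
          \<phi>.diff \<phi>.scale)
    moreover have "\<phi> ((f ^^ i) e) = (if i = r then 1 else 0)"
      using \<phi>_shift[of "monom 1 (degree p - 1 - r)" i] that Suc.prems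
      by (auto simp: e_def degree_monom_eq coeff_monom)
    ultimately show ?thesis
      using h(2) that by (cases "i = r") (simp_all add: a_def)
  qed
  ultimately show ?case
    by blast
qed

lemma cyclic_subspace_plus_complement:
  "W = {a + b | a b. a \<in> cyclic_subspace f v \<and> b \<in> complement}"
proof -
  have W_sub: "vec.subspace W"
    using W by (simp add: invariant_subspace_def)
  have Z_W: "cyclic_subspace f v \<subseteq> W"
    using poly_op_in_invariant_subspace[OF f W v] by (auto simp: cyclic_subspace_def)
  have "w \<in> {a + b | a b. a \<in> cyclic_subspace f v \<and> b \<in> complement}" if w: "w \<in> W" for w
  proof -
    obtain h where h: "\<forall>i<degree p. \<phi> ((f ^^ i) (w - poly_op h f v)) = 0"
      using complement_correction[of "degree p" w] by blast
    have "poly_op h f v \<in> cyclic_subspace f v"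
      by (simp add: cyclic_subspace_def)
    moreover have "w - poly_op h f v \<in> W"
      using vec.subspace_diff[OF W_sub w, of "poly_op h f v"] Z_W calculation by blast
    then have "w - poly_op h f v \<in> complement"
      using h unfolding complement_def by blast
    ultimately show ?thesis
      by (intro CollectI exI[of _ "poly_op h f v"] exI[of _ "w - poly_op h f v"]) simp
  qed
  moreover have "complement \<subseteq> W"
    by (simp add: complement_def)
  then have "{a + b | a b. a \<in> cyclic_subspace f v \<and> b \<in> complement} \<subseteq> W"
    using Z_W vec.subspace_add[OF W_sub] by blast
  ultimately show ?thesis
    by blast
qed

end

lemma cyclic_complement:
  fixes f :: "'a::field ^ 'n \<Rightarrow> 'a ^ 'n"
  assumes f: "linear_op f" and W: "invariant_subspace f W" and v: "v \<in> W"
    and p: "minimal_annihilator f v p" and "0 < degree p"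
    and ann: "\<And>x. x \<in> W \<Longrightarrow> poly_op p f x = 0"
  obtains W' where "invariant_subspace f W'" and "W' \<subseteq> W" and "cyclic_subspace f v \<inter> W' = {0}"
    and "W = {a + b | a b. a \<in> cyclic_subspace f v \<and> b \<in> W'}"
proof -
  obtain \<phi> where \<phi>: "Vector_Spaces.linear (*s) (*) \<phi>"
    and \<phi>_poly_op: "\<And>h. degree h < degree p \<Longrightarrow> \<phi> (poly_op h f v) = coeff h (degree p - 1)"
    using cyclic_functional[OF f p \<open>0 < degree p\<close>] by blast
  interpret cyclic_dual \<phi> f v p W
    by (rule cyclic_dual.intro[OF \<phi> cyclic_dual_axioms.intro[OF f W v p \<open>0 < degree p\<close> ann \<phi>_poly_op]])
  show ?thesis
    using that invariant_complement cyclic_subspace_inter_complement cyclic_subspace_plus_complement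
    by (auto simp: complement_def)
qed

lemma minimal_annihilator_prime_power:
  fixes f :: "'a::field_gcd ^ 'n \<Rightarrow> 'a ^ 'n"
  assumes f: "linear_op f" and q: "prime q"
    and kills: "poly_op (q ^ Suc k) f v = 0" and survives: "poly_op (q ^ k) f v \<noteq> 0"
  shows "minimal_annihilator f v (q ^ Suc k)"
  unfolding minimal_annihilator_def
proof (intro conjI allI impI)
  show "q ^ Suc k \<noteq> 0"
    using q by auto
  show "poly_op (q ^ Suc k) f v = 0"
    by (fact kills)
  fix h :: "'a poly" assume h: "h \<noteq> 0" "degree h < degree (q ^ Suc k)"
  show "poly_op h f v \<noteq> 0"
  proof
    assume h_kills: "poly_op h f v = 0"
  define g where "g = gcd h (q ^ Suc k)"
  have "g = fst (bezout_coefficients h (q ^ Suc k)) * h + snd (bezout_coefficients h (q ^ Suc k)) * q ^ Suc k"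
    by (simp add: g_def bezout_coefficients_fst_snd)
  then have g_kills: "poly_op g f v = 0"
    using h_kills kills by (simp add: poly_op_add[OF f] poly_op_mult[OF f] vec.linear_0[OF linear_poly_op[OF f]])
  have "g dvd q ^ Suc k"
    by (simp add: g_def)
  then obtain m where "m \<le> Suc k" "normalize g = q ^ m"
    by (rule divides_primepow[OF q])
  moreover have "normalize g = g"
    by (simp add: g_def)
  ultimately have m: "m \<le> Suc k" "g = q ^ m"
    by simp_all
  have "m \<noteq> Suc k"
  proof
    assume "m = Suc k"
    then have "q ^ Suc k dvd h"
      using m(2) gcd_dvd1[of h "q ^ Suc k"] by (simp only: g_def)
    then show False
      using h dvd_imp_degree_le[of "q ^ Suc k" h] by simp
  qed
  then have "q ^ k = q ^ (k - m) * g"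
    using m by (simp flip: power_add)
  then have "poly_op (q ^ k) f v = 0"
    using g_kills by (simp add: poly_op_mult[OF f] vec.linear_0[OF linear_poly_op[OF f]])
  then show False
    using survives by blast
  qed
qed

lemma prime_power_cyclic_vector:
  fixes f :: "'a::field_gcd ^ 'n \<Rightarrow> 'a ^ 'n"
  assumes f: "linear_op f" and q: "prime q" and W: "vec.subspace W" "W \<noteq> {0}"
    and ann: "\<And>x. x \<in> W \<Longrightarrow> poly_op (q ^ e) f x = 0"
  obtains v k where "v \<in> W" and "v \<noteq> 0" and "minimal_annihilator f v (q ^ k)"
    and "0 < degree (q ^ k)" and "\<And>x. x \<in> W \<Longrightarrow> poly_op (q ^ k) f x = 0"
proof -
  define k where "k = (LEAST k. \<forall>x\<in>W. poly_op (q ^ k) f x = 0)"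
  have k: "\<And>x. x \<in> W \<Longrightarrow> poly_op (q ^ k) f x = 0"
    unfolding k_def by (rule LeastI[of _ e, THEN bspec]) (use ann in blast)
  have "k \<noteq> 0"
  proof
    assume "k = 0"
    then have "W \<subseteq> {0}"
      using k by (auto simp: poly_op_1[OF f])
    then show False
      using W vec.subspace_0 by blast
  qed
  then obtain k' where "k = Suc k'"
    using not0_implies_Suc by blast
  then obtain v where v: "v \<in> W" "poly_op (q ^ k') f v \<noteq> 0"
    using not_less_Least[of k' "\<lambda>k. \<forall>x\<in>W. poly_op (q ^ k) f x = 0"] by (auto simp: k_def)
  have "poly_op (q ^ Suc k') f v = 0"
    using k v(1) unfolding \<open>k = Suc k'\<close> by blast
  then have "minimal_annihilator f v (q ^ k)"
    unfolding \<open>k = Suc k'\<close> by (rule minimal_annihilator_prime_power[OF f q _ v(2)])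
  moreover have "v \<noteq> 0"
    using v(2) vec.linear_0[OF linear_poly_op[OF f]] by auto
  moreover have "q \<noteq> 0" "degree q \<noteq> 0"
    using q is_unit_iff_degree[of q] not_prime_unit[of q] by auto
  then have "0 < degree (q ^ k)"
    using \<open>k = Suc k'\<close> degree_power_eq[of q k] by simp
  ultimately show ?thesis
    using that v(1) k by blast
qed

lemma prime_power_cofactor:
  fixes P :: "'a::field_gcd poly"
  assumes P: "P \<noteq> 0" and "\<not> is_unit P"
  obtains q e b where "prime q" and "P = q ^ e * b" and "coprime (q ^ e) b" and "b \<noteq> 0"
    and "0 < degree (q ^ e)"
proof -
  obtain q where q: "q dvd P" "prime q"
    using prime_divisor_exists[OF assms] by blast
  then have "\<not> is_unit q" "q \<noteq> 0"
    using not_prime_unit by auto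
  define e where "e = multiplicity q P"
  obtain b where b: "P = q ^ e * b" "\<not> q dvd b"
    using multiplicity_decompose'[OF P \<open>\<not> is_unit q\<close>] unfolding e_def by blast
  have "0 < e"
    using q P \<open>\<not> is_unit q\<close> by (simp add: e_def multiplicity_gt_zero_iff)
  then have "0 < degree (q ^ e)"
    using \<open>q \<noteq> 0\<close> is_unit_iff_degree[of q] \<open>\<not> is_unit q\<close> by (simp add: degree_power_eq)
  moreover have "coprime (q ^ e) b"
    using prime_imp_coprime[OF q(2) b(2)] by simp
  ultimately show ?thesis
    using that q(2) b P by auto
qed

lemma invariant_kernel:
  assumes f: "linear_op f" and W: "invariant_subspace f W"
  shows "invariant_subspace f {x \<in> W. poly_op c f x = 0}"
proof -
  interpret c: Vector_Spaces.linear "(*s)" "(*s)" "poly_op c f"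
    by (rule linear_poly_op[OF f])
  show ?thesis
    using W by (auto simp: invariant_subspace_def vec.subspace_def c.add c.scale c.zero
        poly_op_commute[OF f, symmetric] vec.linear_0[OF f])
qed

lemma coprime_kernel_decomposition:
  fixes f :: "'a::field_gcd ^ 'n \<Rightarrow> 'a ^ 'n"
  assumes f: "linear_op f" and W: "invariant_subspace f W" and "coprime a b"
    and ann: "\<And>x. x \<in> W \<Longrightarrow> poly_op (a * b) f x = 0"
  defines "W1 \<equiv> {x \<in> W. poly_op a f x = 0}" and "W2 \<equiv> {x \<in> W. poly_op b f x = 0}"
  shows "invariant_subspace f W1" and "invariant_subspace f W2" and "W1 \<inter> W2 = {0}"
    and "W = {x + y | x y. x \<in> W1 \<and> y \<in> W2}"
proof -
  show "invariant_subspace f W1" and "invariant_subspace f W2"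
    unfolding W1_def W2_def by (fact invariant_kernel[OF f W])+
  define s where "s = fst (bezout_coefficients a b)"
  define t where "t = snd (bezout_coefficients a b)"
  have "s * a + t * b = 1"
    using bezout_coefficients_fst_snd[of a b] \<open>coprime a b\<close> by (simp add: s_def t_def)
  then have split: "x = poly_op (t * b) f x + poly_op (s * a) f x" for x
  proof -
    have "poly_op (t * b) f x + poly_op (s * a) f x = poly_op (s * a + t * b) f x"
      by (simp only: poly_op_add[OF f] add.commute)
    then show ?thesis
      using \<open>s * a + t * b = 1\<close> by (simp add: poly_op_1[OF f])
  qed
  have "x = 0" if "x \<in> W1" "x \<in> W2" for x
    using split[of x] that vec.linear_0[OF linear_poly_op[OF f]]
    by (simp add: W1_def W2_def poly_op_mult[OF f])
  moreover have "0 \<in> W1" "0 \<in> W2"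
    using \<open>invariant_subspace f W1\<close> \<open>invariant_subspace f W2\<close>
    by (simp_all add: invariant_subspace_def vec.subspace_0)
  ultimately show "W1 \<inter> W2 = {0}"
    by blast
  have "poly_op (t * b) f x \<in> W1" "poly_op (s * a) f x \<in> W2" if "x \<in> W" for x
  proof -
    have "poly_op a f (poly_op (t * b) f x) = poly_op t f (poly_op (a * b) f x)"
      and "poly_op b f (poly_op (s * a) f x) = poly_op s f (poly_op (a * b) f x)"
      by (simp_all only: poly_op_mult[OF f, symmetric] ac_simps)
    then show "poly_op (t * b) f x \<in> W1" "poly_op (s * a) f x \<in> W2"
      using ann[OF that] poly_op_in_invariant_subspace[OF f W that] vec.linear_0[OF linear_poly_op[OF f]]
      by (simp_all add: W1_def W2_def)
  qed
  then have "W \<subseteq> {x + y | x y. x \<in> W1 \<and> y \<in> W2}"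
    using split by blast
  moreover have "{x + y | x y. x \<in> W1 \<and> y \<in> W2} \<subseteq> W"
    using W vec.subspace_add by (auto simp: W1_def W2_def invariant_subspace_def)
  ultimately show "W = {x + y | x y. x \<in> W1 \<and> y \<in> W2}"
    by blast
qed

section \<open>Splitting into a square-zero and a 4-potent part\<close>

definition decomposable_on :: "(bit ^ 'n \<Rightarrow> bit ^ 'n) \<Rightarrow> (bit ^ 'n) set \<Rightarrow> bool" where
  "decomposable_on f W \<longleftrightarrow> (\<exists>N D.
     (\<forall>x\<in>W. \<forall>y\<in>W. N (x + y) = N x + N y \<and> D (x + y) = D x + D y) \<and>
     (\<forall>x\<in>W. N x \<in> W \<and> D x \<in> W \<and> f x = N x + D x \<and> N (N x) = 0 \<and> D (D (D (D x))) = D x))"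

lemma decomposable_on_0: "linear_op f \<Longrightarrow> decomposable_on f {0}"
  unfolding decomposable_on_def
  by (rule exI[of _ "\<lambda>x. 0"], rule exI[of _ "\<lambda>x. 0"]) (simp add: vec.linear_0)

lemma decomposable_on_spanI:
  fixes f N D :: "bit ^ 'n \<Rightarrow> bit ^ 'n"
  assumes f: "linear_op f" and N: "linear_op N" and D: "linear_op D"
    and sum: "\<And>b. b \<in> B \<Longrightarrow> f b = N b + D b"
    and square_zero: "\<And>b. b \<in> B \<Longrightarrow> N (N b) = 0"
    and four_potent: "\<And>b. b \<in> B \<Longrightarrow> D (D (D (D b))) = D b"
    and stable: "N ` B \<subseteq> vec.span B" "D ` B \<subseteq> vec.span B"
  shows "decomposable_on f (vec.span B)"
proof -
  have NN: "linear_op (N \<circ> N)" and DD: "linear_op (D \<circ> D)"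
    using Vector_Spaces.linear_compose[OF N N] Vector_Spaces.linear_compose[OF D D] .
  have DDDD: "linear_op ((D \<circ> D) \<circ> (D \<circ> D))"
    using Vector_Spaces.linear_compose[OF DD DD] .
  have "f x = N x + D x" if "x \<in> vec.span B" for x
    using vec.linear_eq_on_span[OF f vec.linear_compose_add[OF N D] sum that] .
  moreover have "N (N x) = 0" if "x \<in> vec.span B" for x
    using vec.linear_eq_on_span[OF NN vec.linear_zero, of B x] square_zero that by simp
  moreover have "D (D (D (D x))) = D x" if "x \<in> vec.span B" for x
    using vec.linear_eq_on_span[OF DDDD D, of B x] four_potent that by simp
  moreover have "N ` vec.span B \<subseteq> vec.span B" "D ` vec.span B \<subseteq> vec.span B"
    using stable vec.span_minimal[OF _ vec.subspace_span]
    by (simp_all flip: vec.linear_span_image[OF N] vec.linear_span_image[OF D])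
  ultimately show ?thesis
    unfolding decomposable_on_def
    by (intro exI[of _ N] exI[of _ D]) (auto simp: vec.linear_add[OF N] vec.linear_add[OF D])
qed

lemma direct_sum_projection:
  fixes W1 W2 :: "('a::field ^ 'n) set"
  assumes W1: "vec.subspace W1" and W2: "vec.subspace W2" and disjoint: "W1 \<inter> W2 = {0}"
  obtains pr where "\<And>a b. a \<in> W1 \<Longrightarrow> b \<in> W2 \<Longrightarrow> pr (a + b) = a"
proof -
  have "(THE a'. a' \<in> W1 \<and> a + b - a' \<in> W2) = a" if ab: "a \<in> W1" "b \<in> W2" for a b
  proof (rule the_equality)
    show "a \<in> W1 \<and> a + b - a \<in> W2"
      using ab by simp
    fix a' assume a': "a' \<in> W1 \<and> a + b - a' \<in> W2"
    have "a - a' \<in> W1"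
      using a' ab(1) vec.subspace_diff[OF W1] by blast
    moreover have "a - a' \<in> W2"
      using a' ab(2) vec.subspace_diff[OF W2, of "a + b - a'" b] by simp
    ultimately have "a - a' = 0"
      using disjoint by blast
    then show "a' = a"
      by simp
  qed
  then show ?thesis
    by (rule that[of "\<lambda>x. THE a'. a' \<in> W1 \<and> x - a' \<in> W2"])
qed

lemma decomposable_on_direct_sum:
  fixes f :: "bit ^ 'n \<Rightarrow> bit ^ 'n"
  assumes f: "linear_op f" and W1: "vec.subspace W1" and W2: "vec.subspace W2"
    and disjoint: "W1 \<inter> W2 = {0}"
    and dec1: "decomposable_on f W1" and dec2: "decomposable_on f W2"
  shows "decomposable_on f {a + b | a b. a \<in> W1 \<and> b \<in> W2}" (is "decomposable_on f ?W")
proof -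
  obtain N1 D1 where add1: "\<forall>x\<in>W1. \<forall>y\<in>W1. N1 (x + y) = N1 x + N1 y \<and> D1 (x + y) = D1 x + D1 y"
    and prop1: "\<forall>x\<in>W1. N1 x \<in> W1 \<and> D1 x \<in> W1 \<and> f x = N1 x + D1 x \<and> N1 (N1 x) = 0 \<and>
      D1 (D1 (D1 (D1 x))) = D1 x"
    using dec1 unfolding decomposable_on_def by blast
  obtain N2 D2 where add2: "\<forall>x\<in>W2. \<forall>y\<in>W2. N2 (x + y) = N2 x + N2 y \<and> D2 (x + y) = D2 x + D2 y"
    and prop2: "\<forall>x\<in>W2. N2 x \<in> W2 \<and> D2 x \<in> W2 \<and> f x = N2 x + D2 x \<and> N2 (N2 x) = 0 \<and>
      D2 (D2 (D2 (D2 x))) = D2 x"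
    using dec2 unfolding decomposable_on_def by blast
  obtain pr where pr: "\<And>a b. a \<in> W1 \<Longrightarrow> b \<in> W2 \<Longrightarrow> pr (a + b) = a"
    using direct_sum_projection[OF W1 W2 disjoint] by blast
  define glue where "glue F G x = F (pr x) + G (x - pr x)" for F G :: "bit ^ 'n \<Rightarrow> bit ^ 'n" and x
  have glue: "glue F G (a + b) = F a + G b" if "a \<in> W1" "b \<in> W2" for F G a b
    using that by (simp add: glue_def pr)
  have "glue N1 N2 (x + y) = glue N1 N2 x + glue N1 N2 y \<and>
      glue D1 D2 (x + y) = glue D1 D2 x + glue D1 D2 y" if x: "x \<in> ?W" and y: "y \<in> ?W" for x y
  proof -
    obtain a b a' b' where "x = a + b" "y = a' + b'" and ab: "a \<in> W1" "b \<in> W2" "a' \<in> W1" "b' \<in> W2"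
      using x y by blast
    moreover have "x + y = (a + a') + (b + b')"
      using calculation by (simp add: algebra_simps)
    ultimately show ?thesis
      using add1 add2 glue[OF vec.subspace_add[OF W1 ab(1,3)] vec.subspace_add[OF W2 ab(2,4)]] glue[OF ab(1,2)] glue[OF ab(3,4)]
      by (simp add: add_ac)
  qed
  moreover have "glue N1 N2 x \<in> ?W \<and> glue D1 D2 x \<in> ?W \<and> f x = glue N1 N2 x + glue D1 D2 x \<and>
      glue N1 N2 (glue N1 N2 x) = 0 \<and>
      glue D1 D2 (glue D1 D2 (glue D1 D2 (glue D1 D2 x))) = glue D1 D2 x" if x: "x \<in> ?W" for x
  proof -
    obtain a b where "x = a + b" and ab: "a \<in> W1" "b \<in> W2"
      using x by blast
    then show ?thesis
      using prop1 prop2 glue by (auto simp: vec.linear_add[OF f] add_ac)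
  qed
  ultimately show ?thesis
    unfolding decomposable_on_def by (intro exI[of _ "glue N1 N2"] exI[of _ "glue D1 D2"]) auto
qed

section \<open>The cyclic case\<close>

definition cyclotomic3 :: "bit poly" where
  "cyclotomic3 = [:1, 1, 1:]"

definition chain_poly :: "nat \<Rightarrow> nat \<Rightarrow> bit poly" where
  "chain_poly K s =
     (if s < 2 * K then [:0, 1:] ^ (s mod 2) * cyclotomic3 ^ (s div 2)
      else [:0, 1:] ^ (s - 2 * K) * cyclotomic3 ^ K)"

lemma chain_poly_nonzero: "chain_poly K s \<noteq> 0"
  by (simp add: chain_poly_def cyclotomic3_def)

lemma degree_chain_poly: "degree (chain_poly K s) = s"
  by (simp add: chain_poly_def cyclotomic3_def degree_mult_eq degree_power_eq degree_linear_power)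
    presburger

lemma X_mult_chain_poly:
  assumes "\<not> (s < 2 * K \<and> odd s)"
  shows "[:0, 1:] * chain_poly K s = chain_poly K (Suc s)"
proof (cases "s < 2 * K")
  case True
  then have "Suc s < 2 * K" "Suc s mod 2 = 1" "s mod 2 = 0" "Suc s div 2 = s div 2"
    using assms by presburger+
  then show ?thesis
    using True by (simp add: chain_poly_def)
next
  case False
  then show ?thesis
    by (simp add: chain_poly_def Suc_diff_le mult.assoc)
qed

lemma X_mult_chain_poly_odd:
  assumes "s < 2 * K" "odd s"
  shows "[:0, 1:] * chain_poly K s = chain_poly K (Suc s) + chain_poly K s + chain_poly K (s - 1)"
proof -
  define j where "j = s div 2"
  have s: "s = 2 * j + 1"
    using assms by (simp add: j_def)
  have "Suc s < 2 * K \<or> K = Suc j"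
    using assms s by linarith
  then have "chain_poly K (Suc s) = cyclotomic3 ^ Suc j"
    using s by (auto simp: chain_poly_def)
  moreover have "chain_poly K s = [:0, 1:] * cyclotomic3 ^ j" "chain_poly K (s - 1) = cyclotomic3 ^ j"
    using assms s by (simp_all add: chain_poly_def)
  moreover have "[:0, 1:] * ([:0, 1:] * cyclotomic3 ^ j) =
      cyclotomic3 ^ Suc j + [:0, 1:] * cyclotomic3 ^ j + cyclotomic3 ^ j"
  proof -
    have "[:0, 1:] * [:0, 1:] = cyclotomic3 + [:0, 1:] + 1"
      by (simp add: cyclotomic3_def one_pCons)
    then have "[:0, 1:] * ([:0, 1:] * cyclotomic3 ^ j) = (cyclotomic3 + [:0, 1:] + 1) * cyclotomic3 ^ j"
      by (simp only: mult.assoc[symmetric])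
    then show ?thesis
      by (simp only: distrib_right mult_1 power_Suc)
  qed
  ultimately show ?thesis
    by simp
qed

lemma X_mult_chain_poly_last:
  fixes p :: "bit poly"
  assumes d: "degree p = 2 * K + l" and "0 < l"
  defines "pb \<equiv> p div cyclotomic3 ^ K"
  shows "[:0, 1:] * chain_poly K (2 * K + (l - 1)) =
    (\<Sum>i<l. smult (coeff pb i) (chain_poly K (2 * K + i))) + p + p mod cyclotomic3 ^ K"
proof -
  define g where "g = cyclotomic3 ^ K"
  have g: "g \<noteq> 0" "degree g = 2 * K"
    by (simp_all add: g_def cyclotomic3_def degree_power_eq)
  then have "degree pb = l"
    using d degree_div_eq[of g p] by (simp add: pb_def g_def)
  then have "pb = monom 1 l + (\<Sum>i<l. monom (coeff pb i) i)"
    using poly_as_sum_of_monoms[of pb] lead_coeff_bit[of pb] \<open>0 < l\<close>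
    by (metis add.commute degree_0 lessThan_Suc_atMost not_less0 sum.lessThan_Suc)
  moreover have "(\<Sum>i<l. smult (coeff pb i) (chain_poly K (2 * K + i))) = g * (\<Sum>i<l. monom (coeff pb i) i)"
    by (simp add: chain_poly_def g_def monom_altdef sum_distrib_left mult.commute mult.left_commute)
  moreover have "p = g * pb + p mod g"
    by (simp add: pb_def g_def mult.commute)
  moreover have "[:0, 1:] * chain_poly K (2 * K + (l - 1)) = chain_poly K (2 * K + l)"
  proof -
    obtain l' where "l = Suc l'"
      using \<open>0 < l\<close> gr0_implies_Suc by blast
    then show ?thesis
      using X_mult_chain_poly[of "2 * K + l'" K] by simp
  qed
  moreover have "chain_poly K (2 * K + l) = g * monom 1 l"
    by (simp add: chain_poly_def g_def monom_altdef mult.commute)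
  ultimately show ?thesis
    by (metis (no_types, lifting) add.assoc add.commute distrib_left g_def poly_bit_add_self add_0)
qed

definition mat_mult :: "nat \<Rightarrow> (nat \<Rightarrow> nat \<Rightarrow> bit) \<Rightarrow> (nat \<Rightarrow> nat \<Rightarrow> bit) \<Rightarrow> nat \<Rightarrow> nat \<Rightarrow> bit" where
  "mat_mult l A B i j = (\<Sum>k<l. A i k * B k j)"

definition mat_vec :: "nat \<Rightarrow> (nat \<Rightarrow> nat \<Rightarrow> bit) \<Rightarrow> (nat \<Rightarrow> bit) \<Rightarrow> nat \<Rightarrow> bit" where
  "mat_vec l A u i = (\<Sum>j<l. A i j * u j)"

lemma mat_vec_mat_mult: "mat_vec l (mat_mult l A B) u = mat_vec l A (mat_vec l B u)"
  unfolding mat_vec_def mat_mult_def fun_eq_iff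
  by (simp only: sum_distrib_left sum_distrib_right mult.assoc) (rule allI, rule sum.swap)

lemma mat_vec_cong: "(\<And>j. j < l \<Longrightarrow> A i j = B i j) \<Longrightarrow> mat_vec l A u i = mat_vec l B u i"
  unfolding mat_vec_def by (intro sum.cong) auto

definition companion :: "nat \<Rightarrow> (nat \<Rightarrow> bit) \<Rightarrow> nat \<Rightarrow> nat \<Rightarrow> bit" where
  "companion l a i j = (if j + 1 < l then (if i = j + 1 then 1 else 0) else a i)"

text \<open>A coupled splitting can be glued on top of a nonempty chain of pairs: \<open>N\<close> must kill the
  first top vector, the image under \<open>N\<close> of the last pair, and the last rows of \<open>DB\<close> and \<open>DB\<^sup>2\<close> must
  agree, so that \<open>D\<close> can absorb the remainder \<open>y\<close>, on which \<open>D\<^sup>2 = D + 1\<close>.\<close>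

definition top_splitting ::
    "bool \<Rightarrow> nat \<Rightarrow> (nat \<Rightarrow> bit) \<Rightarrow> (nat \<Rightarrow> nat \<Rightarrow> bit) \<Rightarrow> (nat \<Rightarrow> nat \<Rightarrow> bit) \<Rightarrow> bool" where
  "top_splitting coupled l a NB DB \<longleftrightarrow>
     (\<forall>i<l. \<forall>j<l. NB i j + DB i j = companion l a i j \<and> mat_mult l NB NB i j = 0 \<and>
        mat_mult l DB (mat_mult l DB (mat_mult l DB DB)) i j = DB i j) \<and>
     (coupled \<longrightarrow> (\<forall>i<l. NB i 0 = 0) \<and> (\<forall>j<l. mat_mult l DB DB (l - 1) j = DB (l - 1) j))"

lemma top_splitting_1: "top_splitting coupled 1 a (\<lambda>i j. 0) (\<lambda>i j. a 0)"
  by (cases "a 0") (simp_all add: top_splitting_def mat_mult_def companion_def)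

lemma less_2_cases: "(\<forall>i<(2::nat). P i) \<longleftrightarrow> P 0 \<and> P 1"
  by (auto simp: numeral_eq_Suc less_Suc_eq)

lemma sum_less_2: "(\<Sum>k<(2::nat). g k) = g 0 + g 1"
  by (simp add: numeral_eq_Suc add_ac)

lemma top_splitting_2: "\<exists>NB DB. top_splitting False 2 a NB DB"
proof (cases "a 1")
  case zero
  then have "top_splitting False 2 a (\<lambda>i j. companion 2 a i j + (if i = j then a 0 else 0))
      (\<lambda>i j. if i = j then a 0 else 0)"
    by (cases "a 0") (simp_all add: top_splitting_def less_2_cases mat_mult_def sum_less_2 companion_def)
  then show ?thesis
    by blast
next
  case one
  then have "top_splitting False 2 a (\<lambda>i j. if i = 0 \<and> j = 1 then a 0 else 0) (\<lambda>i j. if i = 1 then 1 else 0)"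
    by (cases "a 0") (simp_all add: top_splitting_def less_2_cases mat_mult_def sum_less_2 companion_def)
  then show ?thesis
    by blast
qed

definition matrix_of_rows :: "bit list list \<Rightarrow> nat \<Rightarrow> nat \<Rightarrow> bit" where
  "matrix_of_rows xss i j = xss ! i ! j"

definition top_square_zero_4 :: "(nat \<Rightarrow> bit) \<Rightarrow> nat \<Rightarrow> nat \<Rightarrow> bit" where
  "top_square_zero_4 a = matrix_of_rows
     (if a 0 = 0 \<or> a 3 = 0 then [[0,0,0,0], [0,0,1,1], [0,0,1,1], [0,0,1,1]]
      else if a 1 = 0 then [[0,1,1,1], [0,0,1,0], [0,0,0,0], [0,0,1,0]]
      else if a 2 = 0 then [[0,0,1,0], [0,0,0,0], [0,0,0,0], [0,0,1,0]]
      else [[0,1,1,1], [0,0,0,0], [0,0,1,1], [0,0,1,1]])"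

lemma less_4_cases: "(\<forall>i<(4::nat). P i) \<longleftrightarrow> P 0 \<and> P 1 \<and> P 2 \<and> P 3"
  by (auto simp: numeral_eq_Suc less_Suc_eq)

lemma sum_less_4: "(\<Sum>k<(4::nat). g k) = g 0 + g 1 + g 2 + g 3"
  by (simp add: numeral_eq_Suc add_ac)

lemma top_splitting_4:
  "top_splitting coupled 4 a (top_square_zero_4 a) (\<lambda>i j. companion 4 a i j + top_square_zero_4 a i j)"
  by (cases "a 0"; cases "a 1"; cases "a 2"; cases "a 3")
    (simp_all add: top_splitting_def less_4_cases mat_mult_def sum_less_4 companion_def
      top_square_zero_4_def matrix_of_rows_def)

lemma chain_split:
  fixes p :: "bit poly"
  assumes "0 < degree p"
  obtains K l NB DB where "degree p = 2 * K + l" "0 < l"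
    "top_splitting (0 < K) l (coeff (p div cyclotomic3 ^ K)) NB DB"
proof -
  have "odd (degree p) \<or> degree p = 2 \<or> even (degree p) \<and> 4 \<le> degree p"
    using assms by presburger
  then consider "odd (degree p)" | "degree p = 2" | "even (degree p)" "4 \<le> degree p"
    by blast
  then show ?thesis
  proof cases
    case 1
    then obtain K where "degree p = 2 * K + 1"
      by (rule oddE)
    then show ?thesis
      using that[OF _ _ top_splitting_1] by simp
  next
    case 2
    then show ?thesis
      using that[of 0 2] top_splitting_2[of "coeff p"] by auto
  next
    case 3
    then obtain K where "degree p = 2 * K + 4"
      by (metis add.commute dvd_def even_add le_Suc_ex numeral_Bit0)
    then show ?thesis
      using that[OF _ _ top_splitting_4] by simp
  qed
qed

lemma cyclotomic_chain_action:
  fixes D :: "bit ^ 'n \<Rightarrow> bit ^ 'n" and b :: "nat \<Rightarrow> bit ^ 'n"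
  assumes D: "linear_op D"
    and D_even: "\<And>j. j < K \<Longrightarrow> D (b (2 * j)) = b (2 * j + 1)"
    and D_odd: "\<And>j. j < K \<Longrightarrow> D (b (2 * j + 1)) = b (2 * j) + b (2 * j + 1)"
    and z: "z \<in> vec.span (b ` {..<2 * K})"
  shows "D z \<in> vec.span (b ` {..<2 * K})" and "D (D z) = D z + z"
proof -
  have pair: "D (b s) \<in> vec.span (b ` {..<2 * K}) \<and> D (D (b s)) = D (b s) + b s" if "s < 2 * K" for s
  proof -
    define j where "j = s div 2"
    have j: "j < K" "s = 2 * j \<or> s = 2 * j + 1"
      using that unfolding j_def by presburger+
    then have "b (2 * j) \<in> vec.span (b ` {..<2 * K})" "b (2 * j + 1) \<in> vec.span (b ` {..<2 * K})"
      by (auto intro: vec.span_base)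
    moreover have "D (D (b (2 * j))) = D (b (2 * j)) + b (2 * j)"
      using D_even[OF j(1)] D_odd[OF j(1)] by (simp add: add.commute)
    moreover have "D (D (b (2 * j + 1))) = D (b (2 * j + 1)) + b (2 * j + 1)"
      using D_even[OF j(1)] D_odd[OF j(1)] by (simp add: vec.linear_add[OF D] add.assoc)
    ultimately show ?thesis
      using j(2) D_even[OF j(1)] D_odd[OF j(1)] vec.span_add by auto
  qed
  have "D ` vec.span (b ` {..<2 * K}) \<subseteq> vec.span (b ` {..<2 * K})"
    unfolding vec.linear_span_image[OF D, symmetric]
    using pair by (intro vec.span_minimal vec.subspace_span) auto
  then show "D z \<in> vec.span (b ` {..<2 * K})"
    using z by blast
  have "linear_op (\<lambda>z. D (D z))"
    using Vector_Spaces.linear_compose[OF D D] by (simp add: comp_def)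
  moreover have "linear_op (\<lambda>z. D z + z)"
    using vec.linear_compose_add[OF D vec.linear_ident] .
  ultimately show "D (D z) = D z + z"
    using vec.linear_eq_on_span[OF _ _ _ z] pair by blast
qed

lemma companion_action:
  fixes c :: "nat \<Rightarrow> bit ^ 'n"
  assumes "j < l"
  shows "(\<Sum>i<l. companion l a i j *s c i) = (if j + 1 < l then c (j + 1) else \<Sum>i<l. a i *s c i)"
proof (cases "j + 1 < l")
  case True
  then have "(\<Sum>i<l. companion l a i j *s c i) = (\<Sum>i<l. if i = j + 1 then c i else 0)"
    by (intro sum.cong) (simp_all add: companion_def)
  then show ?thesis
    using True by simp
next
  case False
  then show ?thesis
    by (simp add: companion_def)
qed

lemma top_block_action:
  fixes G :: "bit ^ 'n \<Rightarrow> bit ^ 'n" and c :: "nat \<Rightarrow> bit ^ 'n"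
  assumes G: "linear_op G" and "0 < l"
    and Gc: "\<And>j. j < l \<Longrightarrow> G (c j) = (\<Sum>i<l. M i j *s c i) + (if j = l - 1 then z else 0)"
  shows "G (\<Sum>j<l. u j *s c j) = (\<Sum>i<l. mat_vec l M u i *s c i) + u (l - 1) *s z"
proof -
  have "G (\<Sum>j<l. u j *s c j) = (\<Sum>j<l. u j *s (\<Sum>i<l. M i j *s c i)) + (\<Sum>j<l. if j = l - 1 then u j *s z else 0)"
    by (simp add: vec.linear_sum[OF G] vec.linear_scale[OF G] Gc vector_add_ldistrib sum.distrib
        if_distrib[of "(*s) _"] cong: if_cong)
  also have "(\<Sum>j<l. u j *s (\<Sum>i<l. M i j *s c i)) = (\<Sum>i<l. mat_vec l M u i *s c i)"
    unfolding mat_vec_def vec.scale_sum_right vec.scale_sum_left vector_smult_assoc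
    by (subst sum.swap) (simp only: mult.commute)
  also have "(\<Sum>j<l. if j = l - 1 then u j *s z else 0) = u (l - 1) *s z"
    using \<open>0 < l\<close> by simp
  finally show ?thesis .
qed

lemma top_block_four_potent:
  fixes D :: "bit ^ 'n \<Rightarrow> bit ^ 'n" and c :: "nat \<Rightarrow> bit ^ 'n"
  assumes D: "linear_op D" and "0 < l"
    and Dc: "\<And>j. j < l \<Longrightarrow> D (c j) = (\<Sum>i<l. DB i j *s c i) + (if j = l - 1 then y else 0)"
    and Dy: "D (D y) = D y + y"
    and DB4: "\<And>i j. i < l \<Longrightarrow> j < l \<Longrightarrow>
      mat_mult l DB (mat_mult l DB (mat_mult l DB DB)) i j = DB i j"
    and last_row: "y = 0 \<or> (\<forall>j<l. mat_mult l DB DB (l - 1) j = DB (l - 1) j)"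
  shows "D (D (D (D (\<Sum>j<l. u j *s c j)))) = D (\<Sum>j<l. u j *s c j)"
proof -
  define T where "T u = (\<Sum>j<l. u j *s c j)" for u
  define M where "M u = mat_vec l DB u" for u
  define L where "L = l - 1"
  have "L < l"
    using \<open>0 < l\<close> by (simp add: L_def)
  have DT: "D (T u) = T (M u) + u L *s y" for u
    unfolding T_def M_def L_def by (rule top_block_action[OF D \<open>0 < l\<close> Dc])
  have M4: "T (M (M (M (M u)))) = T (M u)"
    unfolding T_def
  proof (rule sum.cong)
    fix i assume "i \<in> {..<l}"
    have "M (M (M (M u))) i = mat_vec l (mat_mult l DB (mat_mult l DB (mat_mult l DB DB))) u i"
      by (simp only: M_def mat_vec_mat_mult)
    also have "\<dots> = M u i"
      unfolding M_def using DB4 \<open>i \<in> {..<l}\<close> by (intro mat_vec_cong) auto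
    finally show "M (M (M (M u))) i *s c i = M u i *s c i"
      by simp
  qed simp
  show ?thesis
  proof (cases "y = 0")
    case True
    then show ?thesis
      using DT M4 by (simp flip: T_def)
  next
    case False
    then have "mat_mult l DB DB L j = DB L j" if "j < l" for j
      using last_row that by (simp add: L_def)
    then have M2: "M (M w) L = M w L" for w
      unfolding M_def mat_vec_mat_mult[symmetric] using \<open>L < l\<close> by (intro mat_vec_cong) auto
    have "D (D (D (D (T u)))) = T (M (M (M (M u)))) + M (M (M u)) L *s y + M (M u) L *s D y
        + M u L *s D (D y) + u L *s D (D (D y))"
      by (simp add: DT vec.linear_add[OF D] vec.linear_scale[OF D] add_ac)
    also have "\<dots> = T (M u) + u L *s y"
      using M2[of u] M2[of "M u"] by (simp add: M4 Dy vec.linear_add[OF D] vector_add_ldistrib add_ac)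
    finally show ?thesis
      by (simp add: DT flip: T_def)
  qed
qed

lemma chain_index_cases:
  fixes s K l :: nat
  assumes "s < 2 * K + l"
  obtains (even) j where "j < K" "s = 2 * j" | (odd) j where "j < K" "s = 2 * j + 1"
    | (top) i where "i < l" "s = 2 * K + i"
proof -
  have "(\<exists>j<K. s = 2 * j) \<or> (\<exists>j<K. s = 2 * j + 1) \<or> (\<exists>i<l. s = 2 * K + i)"
    using assms by presburger
  then show ?thesis
    using that by blast
qed

locale cyclotomic_chain =
  fixes f N D :: "bit ^ 'n \<Rightarrow> bit ^ 'n" and b :: "nat \<Rightarrow> bit ^ 'n" and K l :: nat
    and a :: "nat \<Rightarrow> bit" and y :: "bit ^ 'n" and NB DB :: "nat \<Rightarrow> nat \<Rightarrow> bit"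
  assumes f: "linear_op f" and N: "linear_op N" and D: "linear_op D" and l: "0 < l"
    and f_even: "\<And>j. j < K \<Longrightarrow> f (b (2 * j)) = b (2 * j + 1)"
    and f_odd: "\<And>j. j < K \<Longrightarrow> f (b (2 * j + 1)) = b (2 * j + 2) + b (2 * j + 1) + b (2 * j)"
    and f_top: "\<And>i. i + 1 < l \<Longrightarrow> f (b (2 * K + i)) = b (2 * K + (i + 1))"
    and f_last: "f (b (2 * K + (l - 1))) = (\<Sum>i<l. a i *s b (2 * K + i)) + y"
    and y: "y \<in> vec.span (b ` {..<2 * K})"
    and splitting: "top_splitting (0 < K) l a NB DB"
    and N_even: "\<And>j. j < K \<Longrightarrow> N (b (2 * j)) = 0"
    and N_odd: "\<And>j. j < K \<Longrightarrow> N (b (2 * j + 1)) = b (2 * j + 2)"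
    and N_top: "\<And>j. j < l \<Longrightarrow> N (b (2 * K + j)) = (\<Sum>i<l. NB i j *s b (2 * K + i))"
    and D_even: "\<And>j. j < K \<Longrightarrow> D (b (2 * j)) = b (2 * j + 1)"
    and D_odd: "\<And>j. j < K \<Longrightarrow> D (b (2 * j + 1)) = b (2 * j) + b (2 * j + 1)"
    and D_top: "\<And>j. j < l \<Longrightarrow>
      D (b (2 * K + j)) = (\<Sum>i<l. DB i j *s b (2 * K + i)) + (if j = l - 1 then y else 0)"
begin

lemma sum_on_basis:
  assumes "s < 2 * K + l"
  shows "f (b s) = N (b s) + D (b s)"
  using assms
proof (cases rule: chain_index_cases)
  case (even j)
  then show ?thesis
    using f_even N_even D_even by simp
next
  case (odd j)
  then show ?thesis
    using f_odd[OF odd(1)] N_odd[OF odd(1)] D_odd[OF odd(1)] by (simp add: add_ac)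
next
  case (top i)
  have split: "NB i' i + DB i' i = companion l a i' i" if "i' < l" for i'
    using splitting top(1) that by (simp add: top_splitting_def)
  have "(\<Sum>i'<l. NB i' i *s b (2 * K + i')) + (\<Sum>i'<l. DB i' i *s b (2 * K + i')) =
      (\<Sum>i'<l. companion l a i' i *s b (2 * K + i'))"
    by (simp only: sum.distrib[symmetric] vector_sadd_rdistrib[symmetric])
      (intro sum.cong refl, simp only: lessThan_iff split)
  also have "\<dots> = (if i + 1 < l then b (2 * K + (i + 1)) else \<Sum>i'<l. a i' *s b (2 * K + i'))"
    by (rule companion_action[OF top(1)])
  finally show ?thesis
    using top f_top f_last N_top[OF top(1)] D_top[OF top(1)] by (cases "i + 1 < l") (auto simp: add_ac)
qed

lemma square_zero_on_basis:
  assumes "s < 2 * K + l"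
  shows "N (N (b s)) = 0"
  using assms
proof (cases rule: chain_index_cases)
  case (even j)
  then show ?thesis
    using N_even vec.linear_0[OF N] by simp
next
  case (odd j)
  show ?thesis
  proof (cases "j + 1 < K")
    case True
    then show ?thesis
      using odd N_odd[OF odd(1)] N_even[of "j + 1"] by simp
  next
    case False
    then have "2 * j + 2 = 2 * K"
      using odd(1) by simp
    then have "N (N (b s)) = (\<Sum>i<l. NB i 0 *s b (2 * K + i))"
      using odd N_odd[OF odd(1)] N_top[OF l] by simp
    also have "\<dots> = 0"
      using odd(1) splitting by (simp add: top_splitting_def)
    finally show ?thesis .
  qed
next
  case (top i)
  have "N (N (b s)) = (\<Sum>k<l. mat_vec l NB (\<lambda>i'. NB i' i) k *s b (2 * K + k))"
    using top top_block_action[OF N l, of "\<lambda>i. b (2 * K + i)" NB 0] N_top by simp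
  also have "\<dots> = 0"
    using top(1) splitting by (intro sum.neutral) (simp add: mat_vec_def mat_mult_def top_splitting_def)
  finally show ?thesis .
qed

lemma four_potent_on_basis:
  assumes "s < 2 * K + l"
  shows "D (D (D (D (b s)))) = D (b s)"
proof (cases "s < 2 * K")
  case True
  have "b s \<in> vec.span (b ` {..<2 * K})"
    using True by (intro vec.span_base) simp
  then have "D (b s) \<in> vec.span (b ` {..<2 * K})"
    using cyclotomic_chain_action(1)[OF D D_even D_odd] by blast
  then show ?thesis
    using cyclotomic_chain_action[OF D D_even D_odd] by (simp add: vec.linear_add[OF D])
next
  case False
  define i where "i = s - 2 * K"
  have i: "i < l" "s = 2 * K + i"
    using assms False by (auto simp: i_def)
  have "b s = (\<Sum>j<l. (if j = i then 1 else 0) *s b (2 * K + j))"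
  proof -
    have "(\<Sum>j<l. (if j = i then 1 else 0) *s b (2 * K + j)) = (\<Sum>j<l. if j = i then b (2 * K + j) else 0)"
      by (intro sum.cong) auto
    then show ?thesis
      using i by simp
  qed
  moreover have "y = 0 \<or> (\<forall>j<l. mat_mult l DB DB (l - 1) j = DB (l - 1) j)"
    using y splitting by (cases K) (auto simp: top_splitting_def)
  ultimately show ?thesis
    using top_block_four_potent[OF D l D_top cyclotomic_chain_action(2)[OF D D_even D_odd y]]
      splitting by (simp add: top_splitting_def)
qed

end

lemma decomposable_on_chain:
  fixes f :: "bit ^ 'n \<Rightarrow> bit ^ 'n" and b :: "nat \<Rightarrow> bit ^ 'n"
  assumes f: "linear_op f" and l: "0 < l"
    and inj: "inj_on b {..<2 * K + l}" and indep: "vec.independent (b ` {..<2 * K + l})"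
    and f_even: "\<And>j. j < K \<Longrightarrow> f (b (2 * j)) = b (2 * j + 1)"
    and f_odd: "\<And>j. j < K \<Longrightarrow> f (b (2 * j + 1)) = b (2 * j + 2) + b (2 * j + 1) + b (2 * j)"
    and f_top: "\<And>i. i + 1 < l \<Longrightarrow> f (b (2 * K + i)) = b (2 * K + (i + 1))"
    and f_last: "f (b (2 * K + (l - 1))) = (\<Sum>i<l. a i *s b (2 * K + i)) + y"
    and y: "y \<in> vec.span (b ` {..<2 * K})"
    and splitting: "top_splitting (0 < K) l a NB DB"
  shows "decomposable_on f (vec.span (b ` {..<2 * K + l}))"
proof -
  define Nval where "Nval s = (if s < 2 * K then (if even s then 0 else b (Suc s)) else (\<Sum>i<l. NB i (s - 2 * K) *s b (2 * K + i)))"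
    for s
  define Dval where "Dval s = (if s < 2 * K then (if even s then b (Suc s) else b (s - 1) + b s)
      else (\<Sum>i<l. DB i (s - 2 * K) *s b (2 * K + i)) + (if s = 2 * K + (l - 1) then y else 0))" for s
  obtain N where N: "linear_op N" and Nb: "\<And>s. s \<in> {..<2 * K + l} \<Longrightarrow> N (b s) = Nval s"
    using linear_op_on_family[OF inj indep, where F = Nval] by metis
  obtain D where D: "linear_op D" and Db: "\<And>s. s \<in> {..<2 * K + l} \<Longrightarrow> D (b s) = Dval s"
    using linear_op_on_family[OF inj indep, where F = Dval] by metis
  have N_low: "N (b (2 * j)) = 0" "N (b (2 * j + 1)) = b (2 * j + 2)"
    and D_low: "D (b (2 * j)) = b (2 * j + 1)" "D (b (2 * j + 1)) = b (2 * j) + b (2 * j + 1)"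
    if "j < K" for j
    using that by (simp_all add: Nb Db Nval_def Dval_def)
  have N_top: "N (b (2 * K + j)) = (\<Sum>i<l. NB i j *s b (2 * K + i))" if "j < l" for j
    using that by (simp add: Nb Nval_def)
  have D_top: "D (b (2 * K + j)) = (\<Sum>i<l. DB i j *s b (2 * K + i)) + (if j = l - 1 then y else 0)"
    if "j < l" for j
    using that by (simp add: Db Dval_def) linarith
  interpret cyclotomic_chain f N D b K l a y NB DB
    by (rule cyclotomic_chain.intro[OF f N D l f_even f_odd f_top f_last y splitting
          N_low(1) N_low(2) N_top D_low(1) D_low(2) D_top])
  have "b s \<in> vec.span (b ` {..<2 * K + l})" if "s < 2 * K + l" for s
    using that by (intro vec.span_base) simp
  moreover have "vec.span (b ` {..<2 * K}) \<subseteq> vec.span (b ` {..<2 * K + l})"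
    by (intro vec.span_mono image_mono) auto
  ultimately have "N (b s) \<in> vec.span (b ` {..<2 * K + l}) \<and> D (b s) \<in> vec.span (b ` {..<2 * K + l})"
    if "s < 2 * K + l" for s
    using that y l by (auto simp: Nb Db Nval_def Dval_def
        intro!: vec.span_sum vec.span_scale vec.span_add vec.span_zero)
  then show ?thesis
    by (intro decomposable_on_spanI[OF f N D])
      (auto simp: sum_on_basis square_zero_on_basis four_potent_on_basis)
qed

lemma decomposable_on_cyclic_subspace:
  fixes f :: "bit ^ 'n \<Rightarrow> bit ^ 'n"
  assumes f: "linear_op f" and p: "minimal_annihilator f v p"
  shows "decomposable_on f (cyclic_subspace f v)"
proof (cases "degree p = 0")
  case True
  then have "cyclic_subspace f v = {0}"
    by (rule cyclic_subspace_trivial[OF f p])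
  then show ?thesis
    using decomposable_on_0[OF f] by simp
next
  case False
  then have "0 < degree p"
    by simp
  then obtain K l NB DB where d: "degree p = 2 * K + l" and "0 < l"
    and top: "top_splitting (0 < K) l (coeff (p div cyclotomic3 ^ K)) NB DB"
    using chain_split by blast
  define b where "b s = poly_op (chain_poly K s) f v" for s
  have family: "degree (chain_poly K s) = s \<and> chain_poly K s \<noteq> 0" for s
    by (simp add: degree_chain_poly chain_poly_nonzero)
  note basis = cyclic_subspace_basis[OF f p \<open>0 < degree p\<close> family, folded b_def, unfolded d]
  have fb: "f (b s) = poly_op ([:0, 1:] * chain_poly K s) f v" for s
    by (simp only: b_def poly_op_X_mult[OF f])
  have f_even: "f (b (2 * j)) = b (2 * j + 1)" if "j < K" for j
    using X_mult_chain_poly[of "2 * j" K] unfolding fb by (simp add: b_def)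
  have f_odd: "f (b (2 * j + 1)) = b (2 * j + 2) + b (2 * j + 1) + b (2 * j)" if "j < K" for j
    using X_mult_chain_poly_odd[of "2 * j + 1" K] that unfolding fb by (simp add: b_def poly_op_add[OF f])
  have f_top: "f (b (2 * K + i)) = b (2 * K + (i + 1))" for i
    using X_mult_chain_poly[of "2 * K + i" K] unfolding fb by (simp add: b_def)
  define y where "y = poly_op (p mod cyclotomic3 ^ K) f v"
  have f_last: "f (b (2 * K + (l - 1))) = (\<Sum>i<l. coeff (p div cyclotomic3 ^ K) i *s b (2 * K + i)) + y"
    using X_mult_chain_poly_last[OF d \<open>0 < l\<close>] p unfolding fb
    by (simp add: b_def y_def poly_op_add[OF f] poly_op_sum[OF f] poly_op_smult[OF f]
        minimal_annihilator_def)
  have "y \<in> vec.span (b ` {..<2 * K})"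
  proof (cases "p mod cyclotomic3 ^ K = 0")
    case True
    then show ?thesis
      by (simp add: y_def vec.span_zero)
  next
    case False
    then have "degree (p mod cyclotomic3 ^ K) < 2 * K"
      using degree_mod_less[of "cyclotomic3 ^ K" p]
      by (simp add: cyclotomic3_def degree_power_eq)
    then show ?thesis
      unfolding y_def b_def using poly_op_in_span_triangular[OF f] family by blast
  qed
  then have "decomposable_on f (vec.span (b ` {..<2 * K + l}))"
    using decomposable_on_chain[OF f \<open>0 < l\<close> basis(1,2) f_even f_odd f_top f_last _ top] by blast
  then show ?thesis
    using basis(3) by simp
qed

lemma decomposable_on_primary:
  fixes f :: "bit ^ 'n \<Rightarrow> bit ^ 'n"
  assumes f: "linear_op f" and q: "prime q"
  shows "invariant_subspace f W \<Longrightarrow> (\<And>x. x \<in> W \<Longrightarrow> poly_op (q ^ e) f x = 0) \<Longrightarrow>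
    decomposable_on f W"
proof (induction "card W" arbitrary: W rule: less_induct)
  case less
  have W_sub: "vec.subspace W"
    using less.prems(1) by (simp add: invariant_subspace_def)
  show ?case
  proof (cases "W = {0}")
    case True
    then show ?thesis
      using decomposable_on_0[OF f] by simp
  next
    case False
    then obtain v k where v: "v \<in> W" "v \<noteq> 0" and p: "minimal_annihilator f v (q ^ k)"
      and "0 < degree (q ^ k)" and ann: "\<And>x. x \<in> W \<Longrightarrow> poly_op (q ^ k) f x = 0"
      using prime_power_cyclic_vector[OF f q W_sub _ less.prems(2)] by blast
    obtain W' where W': "invariant_subspace f W'" "W' \<subseteq> W"
      and disjoint: "cyclic_subspace f v \<inter> W' = {0}"
      and sum: "W = {a + b | a b. a \<in> cyclic_subspace f v \<and> b \<in> W'}"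
      by (rule cyclic_complement[OF f less.prems(1) v(1) p \<open>0 < degree (q ^ k)\<close> ann])
    have "v \<notin> W'"
      using disjoint v(2) cyclic_subspace_generator[OF f] by blast
    then have "card W' < card W"
      using W'(2) v(1) by (intro psubset_card_mono) auto
    then have "decomposable_on f W'"
      using less.hyps[OF _ W'(1)] W'(2) less.prems(2) by blast
    moreover have "decomposable_on f (cyclic_subspace f v)"
      by (rule decomposable_on_cyclic_subspace[OF f p])
    moreover have "vec.subspace (cyclic_subspace f v)" "vec.subspace W'"
      using invariant_cyclic_subspace[OF f] W'(1) by (simp_all add: invariant_subspace_def)
    ultimately show ?thesis
      unfolding sum using decomposable_on_direct_sum[OF f _ _ disjoint] by blast
  qed
qed

lemma decomposable_on_annihilated:
  fixes f :: "bit ^ 'n \<Rightarrow> bit ^ 'n"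
  assumes f: "linear_op f"
  shows "P \<noteq> 0 \<Longrightarrow> invariant_subspace f W \<Longrightarrow> (\<And>x. x \<in> W \<Longrightarrow> poly_op P f x = 0) \<Longrightarrow>
    decomposable_on f W"
proof (induction "degree P" arbitrary: P W rule: less_induct)
  case less
  note P = less.prems(1) and W = less.prems(2) and ann = less.prems(3)
  show ?case
  proof (cases "is_unit P")
    case True
    then have "W \<subseteq> {0}"
      using ann by (auto simp: is_unit_bit_poly poly_op_1[OF f])
    then have "W = {0}"
      using W by (auto simp: invariant_subspace_def vec.subspace_0)
    then show ?thesis
      using decomposable_on_0[OF f] by simp
  next
    case False
    then obtain q e b where q: "prime q" and b: "P = q ^ e * b" and "coprime (q ^ e) b"
      and "b \<noteq> 0" and "0 < degree (q ^ e)"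
      by (rule prime_power_cofactor[OF P])
    show ?thesis
    proof (cases "is_unit b")
      case True
      then have "P = q ^ e"
        using b by (simp add: is_unit_bit_poly)
      then show ?thesis
        using decomposable_on_primary[OF f q W, of e] ann by simp
    next
      case False
      then have "0 < degree b"
        using \<open>b \<noteq> 0\<close> is_unit_iff_degree[of b] by simp
      moreover have "q ^ e \<noteq> 0"
        using \<open>0 < degree (q ^ e)\<close> by (metis degree_0 less_irrefl)
      then have "degree P = degree (q ^ e) + degree b"
        using b \<open>b \<noteq> 0\<close> by (simp add: degree_mult_eq)
      ultimately have less_P: "degree (q ^ e) < degree P" "degree b < degree P"
        using \<open>0 < degree (q ^ e)\<close> by simp_all
      note split = coprime_kernel_decomposition[OF f W \<open>coprime (q ^ e) b\<close> ann[unfolded b]]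
      have "decomposable_on f {x \<in> W. poly_op (q ^ e) f x = 0}"
        using \<open>q ^ e \<noteq> 0\<close> by (intro less.hyps[OF less_P(1)] split(1)) auto
      moreover have "decomposable_on f {x \<in> W. poly_op b f x = 0}"
        using \<open>b \<noteq> 0\<close> by (intro less.hyps[OF less_P(2)] split(2)) auto
      moreover have "vec.subspace {x \<in> W. poly_op (q ^ e) f x = 0}" "vec.subspace {x \<in> W. poly_op b f x = 0}"
        using split(1,2) by (simp_all add: invariant_subspace_def)
      ultimately have "decomposable_on f
          {x + y | x y. x \<in> {x \<in> W. poly_op (q ^ e) f x = 0} \<and> y \<in> {x \<in> W. poly_op b f x = 0}}"
        by (intro decomposable_on_direct_sum[OF f _ _ split(3)])
      then show ?thesis
        by (subst split(4))
    qed
  qed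
qed

lemma annihilating_poly_exists:
  fixes f :: "'a::{field, finite} ^ 'n \<Rightarrow> 'a ^ 'n"
  assumes f: "linear_op f"
  obtains P where "P \<noteq> 0" and "\<And>x. poly_op P f x = 0"
proof -
  have "\<not> inj (\<lambda>k::nat. f ^^ k)"
  proof
    assume "inj (\<lambda>k::nat. f ^^ k)"
    moreover have "finite (range (\<lambda>k::nat. f ^^ k))"
      by (rule finite_subset[OF subset_UNIV finite_class.finite_UNIV])
    ultimately have "finite (UNIV :: nat set)"
      using finite_imageD by blast
    then show False
      by simp
  qed
  then obtain i j :: nat where "i \<noteq> j" "f ^^ i = f ^^ j"
    unfolding inj_def by blast
  define P :: "'a poly" where "P = monom 1 i + monom (- 1) j"
  have "coeff P i = 1"
    using \<open>i \<noteq> j\<close> by (simp add: P_def coeff_monom)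
  then have "P \<noteq> 0"
    by (metis coeff_0 one_neq_zero)
  moreover have "poly_op P f x = 0" for x
  proof -
    have "poly_op P f x = (f ^^ i) x + (- 1) *s (f ^^ j) x"
      unfolding P_def poly_op_add[OF f] poly_op_monom[OF f] by simp
    then show ?thesis
      unfolding \<open>f ^^ i = f ^^ j\<close> vector_sneg_minus1 by simp
  qed
  ultimately show ?thesis
    using that by blast
qed

lemma matrix_splitting_if_decomposable:
  fixes A :: "bit ^ 'n ^ 'n"
  assumes "decomposable_on ((*v) A) UNIV"
  shows "\<exists>N D :: bit ^ 'n ^ 'n. A = N + D \<and> N ** N = 0 \<and> D ** D ** D ** D = D"
proof -
  obtain N D where additive: "\<forall>x\<in>UNIV. \<forall>y\<in>UNIV. N (x + y) = N x + N y \<and> D (x + y) = D x + D y"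
    and props: "\<forall>x\<in>UNIV. N x \<in> UNIV \<and> D x \<in> UNIV \<and> A *v x = N x + D x \<and> N (N x) = 0 \<and>
      D (D (D (D x))) = D x"
    using assms unfolding decomposable_on_def by blast
  have "linear_op N" "linear_op D"
    using additive by (auto intro: linear_op_bitI)
  then have N: "matrix N *v x = N x" and D: "matrix D *v x = D x" for x
    by (simp_all add: matrix_works)
  have "A *v x = (matrix N + matrix D) *v x" for x
    using props by (simp add: matrix_vector_mult_add_rdistrib N D)
  then have "A = matrix N + matrix D"
    by (simp add: matrix_eq)
  moreover have "(matrix N ** matrix N) *v x = 0 *v x" for x
    using props by (simp add: N flip: matrix_vector_mul_assoc)
  then have "matrix N ** matrix N = 0"
    by (simp add: matrix_eq)
  moreover have "(matrix D ** matrix D ** matrix D ** matrix D) *v x = matrix D *v x" for x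
    using props by (simp add: D flip: matrix_vector_mul_assoc)
  then have "matrix D ** matrix D ** matrix D ** matrix D = matrix D"
    by (simp add: matrix_eq)
  ultimately show ?thesis
    by blast
qed

theorem corollary3p3:
  fixes A :: "bit ^ 'n ^ 'n"
  shows "\<exists>N D :: bit ^ 'n ^ 'n. A = N + D \<and> N ** N = 0 \<and> D ** D ** D ** D = D"
proof -
  have f: "linear_op ((*v) A)"
    by (rule matrix_vector_mul_linear_gen)
  obtain P where "P \<noteq> 0" "\<And>x. poly_op P ((*v) A) x = 0"
    using annihilating_poly_exists[OF f] by blast
  then have "decomposable_on ((*v) A) UNIV"
    by (intro decomposable_on_annihilated[OF f]) (simp_all add: invariant_subspace_def)
  then show ?thesis
    by (rule matrix_splitting_if_decomposable)
qed

end
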